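(* Let $L$ be a positive integer and $U$ a real number with $L > \frac{8}{U}$. Consider, for real $\Lambda$, the equation $$\sin q - \Lambda = \frac{U}{4}\cot\left(\frac{qL}{2}\right)$$ for $q\in[0,2\pi)$. This equation has exactly $L$ branches of solutions $q_\ell(\Lambda)$, $\ell=1,\dots,L$ (real-valued functions of $\Lambda\in\mathbb{R}$), with the properties (i) $(\ell-1)\frac{2\pi}{L} \le q_\ell(\Lambda) \le \ell\frac{2\pi}{L}$; (ii) $\frac{d q_\ell(\Lambda)}{d\Lambda} > 0$; (iii) $\lim_{\Lambda\to-\infty} q_\ell(\Lambda) = (\ell-1)\frac{2\pi}{L}$ and $\lim_{\Lambda\to\infty} q_\ell(\Lambda) = \ell\frac{2\pi}{L}$.
   Context: The inequality $L>8/U$ is called the Takahashi condition. A branch of solutions means a function $\Lambda\mapsto q(\Lambda)$ with $q(\Lambda)\in[0,2\pi)$ satisfying the equation for every real $\Lambda$. *)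

theory Defs
  imports "HOL-Analysis.Analysis"
begin

text \<open>Since cot is singular where
  sin(q L/2) = 0 (and Isabelle's total cot would return 0 there), we require that
  cot(q L/2) is defined, i.e. sin(q L/2) is nonzero.\<close>
definition takahashi_eq :: "real \<Rightarrow> nat \<Rightarrow> real \<Rightarrow> real \<Rightarrow> bool" where
  "takahashi_eq U L \<Lambda> q \<longleftrightarrow>
     sin (q * real L / 2) \<noteq> 0 \<and> sin q - \<Lambda> = U / 4 * cot (q * real L / 2)"

end

theory Submission imports Defs begin

text \<open>Between consecutive zeros of sin (q L / 2), i.e. on each interval
  ((l - 1) 2 pi / L, l 2 pi / L), the function F q = sin q - (U / 4) cot (q L / 2) has derivative
  cos q + U L / (8 sin (q L / 2) ^ 2) \<ge> -1 + U L / 8, which is positive exactly by the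
  Takahashi condition, and F runs from -\<infinity> to +\<infinity> because cot does.  Hence F is an
  increasing bijection of that interval onto the reals, and the l-th branch is its inverse, which
  inherits a positive derivative and the endpoint limits.  The solutions in [0, 2 pi) avoid the
  zeros of sin (q L / 2), so each lies in exactly one of these L intervals.\<close>

lemma DERIV_pos_imp_strict_mono_on_Ioo:
  fixes F F' :: "real \<Rightarrow> real"
  assumes "\<And>x. x \<in> {a<..<b} \<Longrightarrow> (F has_real_derivative F' x) (at x)"
    and "\<And>x. x \<in> {a<..<b} \<Longrightarrow> 0 < F' x"
  shows "strict_mono_on {a<..<b} F"
proof (rule strict_mono_onI)
  fix x y assume xy: "x \<in> {a<..<b}" "y \<in> {a<..<b}" "x < y"
  show "F x < F y"
  proof (rule DERIV_pos_imp_increasing[OF xy(3)])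
    fix z assume "x \<le> z" "z \<le> y"
    then have "z \<in> {a<..<b}" using xy by auto
    then show "\<exists>D. (F has_real_derivative D) (at z) \<and> D > 0" using assms by blast
  qed
qed

lemma continuous_on_Ioo_unbounded_surj:
  fixes F :: "real \<Rightarrow> real"
  assumes cont: "continuous_on {a<..<b} F"
    and below: "\<And>M. \<exists>x\<in>{a<..<b}. F x < M"
    and above: "\<And>M. \<exists>x\<in>{a<..<b}. M < F x"
  shows "F ` {a<..<b} = UNIV"
proof -
  have connected: "connected (F ` {a<..<b})"
    using cont by (rule connected_continuous_image) simp
  have "y \<in> F ` {a<..<b}" for y
  proof -
    obtain x1 x2 where x: "x1 \<in> {a<..<b}" "F x1 < y" "x2 \<in> {a<..<b}" "y < F x2"
      using below above by blast
    show ?thesis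
      using connectedD_interval[OF connected imageI[OF x(1)] imageI[OF x(3)]] x(2,4)
      by (simp add: less_imp_le)
  qed
  then show ?thesis by blast
qed

lemma strict_mono_on_inverse_tendsto_at_bot:
  fixes F g :: "real \<Rightarrow> real"
  assumes mono: "strict_mono_on {a<..<b} F"
    and g: "\<And>y. g y \<in> {a<..<b}" and inverse: "\<And>y. F (g y) = y"
  shows "(g \<longlongrightarrow> a) at_bot"
proof (rule order_tendstoI)
  fix c assume "c < a"
  then show "eventually (\<lambda>y. c < g y) at_bot"
    using g by (intro always_eventually) (auto intro: less_trans)
next
  fix c assume "a < c"
  define z where "z = (a + min c b) / 2"
  have z: "z \<in> {a<..<b}" "z < c"
    using \<open>a < c\<close> g[of 0] by (auto simp: z_def)
  have "g y < c" if "y < F z" for y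
  proof (rule ccontr)
    assume "\<not> g y < c"
    then have "F z < F (g y)"
      using z g by (intro strict_mono_onD[OF mono]) auto
    then show False using that inverse by (simp add: less_not_sym)
  qed
  then show "eventually (\<lambda>y. g y < c) at_bot"
    unfolding eventually_at_bot_dense by blast
qed

lemma strict_mono_on_inverse_tendsto_at_top:
  fixes F g :: "real \<Rightarrow> real"
  assumes mono: "strict_mono_on {a<..<b} F"
    and g: "\<And>y. g y \<in> {a<..<b}" and inverse: "\<And>y. F (g y) = y"
  shows "(g \<longlongrightarrow> b) at_top"
proof (rule order_tendstoI)
  fix c assume "b < c"
  then show "eventually (\<lambda>y. g y < c) at_top"
    using g by (intro always_eventually) (auto intro: less_trans)
next
  fix c assume "c < b"
  define z where "z = (b + max c a) / 2"
  have z: "z \<in> {a<..<b}" "c < z"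
    using \<open>c < b\<close> g[of 0] by (auto simp: z_def)
  have "c < g y" if "F z < y" for y
  proof (rule ccontr)
    assume "\<not> c < g y"
    then have "F (g y) < F z"
      using z g by (intro strict_mono_onD[OF mono]) auto
    then show False using that inverse by (simp add: less_not_sym)
  qed
  then show "eventually (\<lambda>y. c < g y) at_top"
    unfolding eventually_at_top_dense by blast
qed

lemma strict_mono_on_inverse_has_real_derivative:
  fixes F F' g :: "real \<Rightarrow> real"
  assumes der: "\<And>x. x \<in> {a<..<b} \<Longrightarrow> (F has_real_derivative F' x) (at x)"
    and nonzero: "F' (g y) \<noteq> 0"
    and mono: "strict_mono_on {a<..<b} F"
    and g: "\<And>y. g y \<in> {a<..<b}" and inverse: "\<And>y. F (g y) = y"
  shows "(g has_real_derivative inverse (F' (g y))) (at y)"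
proof -
  define c where "c = (a + g y) / 2"
  define d where "d = (g y + b) / 2"
  have cd: "{c..d} \<subseteq> {a<..<b}" "c < g y" "g y < d"
    using g[of y] by (auto simp: c_def d_def)
  have "isCont g (F (g y))"
  proof (rule isCont_inverse_function2[OF cd(2,3)])
    fix z assume "c \<le> z" "z \<le> d"
    then have z: "z \<in> {a<..<b}" using cd(1) by auto
    show "g (F z) = z"
      by (rule strict_mono_on_eqD[OF mono _ z g]) (simp add: inverse)
    show "isCont F z"
      using der[OF z] by (rule DERIV_isCont)
  qed
  then have "isCont g y" by (simp add: inverse)
  then show ?thesis
    using der[OF g] nonzero inverse
    by (intro DERIV_inverse_function[where a = "y - 1" and b = "y + 1"]) auto
qed

definition takahashi_fun :: "real \<Rightarrow> nat \<Rightarrow> real \<Rightarrow> real" where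
  "takahashi_fun U L x = sin x - U / 4 * cot (x * real L / 2)"

definition takahashi_deriv :: "real \<Rightarrow> nat \<Rightarrow> real \<Rightarrow> real" where
  "takahashi_deriv U L x = cos x + U * real L / (8 * (sin (x * real L / 2))\<^sup>2)"

definition branch_interval :: "nat \<Rightarrow> nat \<Rightarrow> real set" where
  "branch_interval L l = {(real l - 1) * (2 * pi / real L) <..< real l * (2 * pi / real L)}"

lemma takahashi_eq_iff:
  "takahashi_eq U L \<Lambda> x \<longleftrightarrow> sin (x * real L / 2) \<noteq> 0 \<and> takahashi_fun U L x = \<Lambda>"
  by (auto simp: takahashi_eq_def takahashi_fun_def)

lemma mem_branch_interval_iff:
  assumes "L > 0"
  shows "x \<in> branch_interval L l \<longleftrightarrow>
    (real l - 1) * pi < x * real L / 2 \<and> x * real L / 2 < real l * pi"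
  using assms by (auto simp: branch_interval_def field_simps)

lemma sin_nonzero_on_branch_interval:
  assumes "L > 0" "x \<in> branch_interval L l"
  shows "sin (x * real L / 2) \<noteq> 0"
proof
  assume "sin (x * real L / 2) = 0"
  then obtain i :: int where "x * real L / 2 = of_int i * pi"
    by (auto simp: sin_zero_iff_int2)
  with assms have "real_of_int (int l - 1) < of_int i" "real_of_int i < of_int (int l)"
    by (auto simp: mem_branch_interval_iff)
  then show False
    unfolding of_int_less_iff by linarith
qed

lemma nonzero_sin_half_eq_Union_branch_interval:
  assumes "L > 0"
  shows "{x \<in> {0..<2*pi}. sin (x * real L / 2) \<noteq> 0} = (\<Union>l\<in>{1..L}. branch_interval L l)"
proof (intro equalityI subsetI)
  fix x assume "x \<in> (\<Union>l\<in>{1..L}. branch_interval L l)"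
  then obtain l where l: "l \<in> {1..L}" "x \<in> branch_interval L l" by blast
  have "0 \<le> (real l - 1) * (2 * pi / real L)" "real l * (2 * pi / real L) \<le> 2 * pi"
    using l(1) assms by (auto simp: field_simps)
  moreover have "(real l - 1) * (2 * pi / real L) < x" "x < real l * (2 * pi / real L)"
    using l(2) by (auto simp: branch_interval_def)
  ultimately show "x \<in> {x \<in> {0..<2*pi}. sin (x * real L / 2) \<noteq> 0}"
    using sin_nonzero_on_branch_interval[OF assms l(2)] by auto
next
  fix x assume x: "x \<in> {x \<in> {0..<2*pi}. sin (x * real L / 2) \<noteq> 0}"
  define t where "t = x * real L / (2 * pi)"
  define k where "k = \<lfloor>t\<rfloor>"
  have half: "x * real L / 2 = t * pi" by (simp add: t_def)
  have t: "0 \<le> t" "t < real L" using x assms by (auto simp: t_def field_simps)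
  have "t \<noteq> of_int k" using x half by (auto simp: sin_zero_iff_int2)
  then have k: "of_int k < t" "t < of_int k + 1"
    using of_int_floor_le[of t] real_of_int_floor_add_one_gt[of t] by (auto simp: k_def less_le)
  have "0 \<le> k" "k < int L" using k t by linarith+
  then have l: "nat k + 1 \<in> {1..L}" and l_minus_1: "real (nat k + 1) - 1 = of_int k" by auto
  have "x \<in> branch_interval L (nat k + 1)"
    unfolding mem_branch_interval_iff[OF assms] half using k l_minus_1 pi_gt_zero
    by (simp add: mult_strict_right_mono)
  with l show "x \<in> (\<Union>l\<in>{1..L}. branch_interval L l)" by blast
qed

lemma branch_interval_unique:
  assumes "L > 0" "x \<in> branch_interval L l" "x \<in> branch_interval L l'"
  shows "l = l'"
proof -
  have le: "l \<le> l'" if "x \<in> branch_interval L l" "x \<in> branch_interval L l'" for l l'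
  proof (rule ccontr)
    assume "\<not> l \<le> l'"
    then have "real l' * pi \<le> (real l - 1) * pi" by (simp add: mult_right_mono)
    with that show False by (auto simp: mem_branch_interval_iff[OF assms(1)])
  qed
  show ?thesis
    using le[OF assms(2,3)] le[OF assms(3,2)] by (rule antisym)
qed

lemma takahashi_fun_has_real_derivative:
  assumes "sin (x * real L / 2) \<noteq> 0"
  shows "(takahashi_fun U L has_real_derivative takahashi_deriv U L x) (at x)"
proof -
  have cot: "((\<lambda>x. cot (x * real L / 2)) has_real_derivative
               - inverse ((sin (x * real L / 2))\<^sup>2) * (real L / 2)) (at x)"
    by (rule DERIV_chain2[where g = "\<lambda>x. x * real L / 2", OF DERIV_cot[OF assms]])
      (auto intro!: derivative_eq_intros)
  show ?thesis
    unfolding takahashi_fun_def[abs_def] takahashi_deriv_def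
    by (rule derivative_eq_intros cot refl | simp add: field_simps)+
qed

lemma takahashi_deriv_pos:
  assumes "8 < U * real L" "sin (x * real L / 2) \<noteq> 0"
  shows "0 < takahashi_deriv U L x"
proof -
  have "0 < (sin (x * real L / 2))\<^sup>2" "(sin (x * real L / 2))\<^sup>2 \<le> 1"
    using assms(2) by (auto simp: abs_square_le_1)
  then have "U * real L / 8 \<le> U * real L / (8 * (sin (x * real L / 2))\<^sup>2)"
    using assms(1) by (intro divide_left_mono) auto
  then show ?thesis
    unfolding takahashi_deriv_def using assms(1) cos_ge_minus_one[of x] by linarith
qed

lemma cot_periodic_int: "cot (x + of_int i * pi) = cot x"
  by (simp add: cot_altdef)

lemma cot_unbounded: "\<exists>t\<in>{0<..<pi/2}. M < cot t"
proof
  let ?t = "pi/2 - arctan (\<bar>M\<bar> + 1)"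
  show "?t \<in> {0<..<pi/2}"
    using arctan_ubound[of "\<bar>M\<bar> + 1"] by auto
  show "M < cot ?t"
    using tan_cot'[of ?t] by (simp add: tan_arctan)
qed

lemma takahashi_fun_unbounded_below:
  assumes "L > 0" "U > 0"
  shows "\<exists>x\<in>branch_interval L l. takahashi_fun U L x < M"
proof -
  obtain t where t: "t \<in> {0<..<pi/2}" "4 * (\<bar>M\<bar> + 1) / U < cot t"
    using cot_unbounded by blast
  define x where "x = (real l - 1) * (2 * pi / real L) + 2 * t / real L"
  have half: "x * real L / 2 = t + of_int (int l - 1) * pi"
    using assms(1) by (simp add: x_def field_simps)
  have "x \<in> branch_interval L l"
    using t unfolding mem_branch_interval_iff[OF assms(1)] half by (auto simp: algebra_simps)
  moreover have "takahashi_fun U L x < M"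
  proof -
    have "\<bar>M\<bar> + 1 < U / 4 * cot t"
      using t(2) assms(2) by (simp add: field_simps)
    moreover have "takahashi_fun U L x = sin x - U / 4 * cot t"
      unfolding takahashi_fun_def half cot_periodic_int ..
    ultimately show ?thesis
      using sin_le_one[of x] by linarith
  qed
  ultimately show ?thesis by blast
qed

lemma takahashi_fun_unbounded_above:
  assumes "L > 0" "U > 0"
  shows "\<exists>x\<in>branch_interval L l. M < takahashi_fun U L x"
proof -
  obtain t where t: "t \<in> {0<..<pi/2}" "4 * (\<bar>M\<bar> + 1) / U < cot t"
    using cot_unbounded by blast
  define x where "x = real l * (2 * pi / real L) - 2 * t / real L"
  have half: "x * real L / 2 = - t + of_int (int l) * pi"
    using assms(1) by (simp add: x_def field_simps)
  have "x \<in> branch_interval L l"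
    using t unfolding mem_branch_interval_iff[OF assms(1)] half by (auto simp: algebra_simps)
  moreover have "M < takahashi_fun U L x"
  proof -
    have "\<bar>M\<bar> + 1 < U / 4 * cot t"
      using t(2) assms(2) by (simp add: field_simps)
    moreover have "takahashi_fun U L x = sin x + U / 4 * cot t"
      unfolding takahashi_fun_def half cot_periodic_int by simp
    ultimately show ?thesis
      using sin_ge_minus_one[of x] by linarith
  qed
  ultimately show ?thesis by blast
qed

locale takahashi_condition =
  fixes U :: real and L :: nat
  assumes L_pos: "0 < L" and U_pos: "0 < U" and UL_gt_8: "8 < U * real L"
begin

lemma takahashi_fun_DERIV_on_branch_interval:
  assumes "x \<in> branch_interval L l"
  shows "(takahashi_fun U L has_real_derivative takahashi_deriv U L x) (at x)"
    and "0 < takahashi_deriv U L x"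
  using sin_nonzero_on_branch_interval[OF L_pos assms]
  by (simp_all add: takahashi_fun_has_real_derivative takahashi_deriv_pos UL_gt_8)

lemmas takahashi_fun_DERIV_on_Ioo =
  takahashi_fun_DERIV_on_branch_interval[unfolded branch_interval_def]

lemma strict_mono_on_branch_interval:
  "strict_mono_on (branch_interval L l) (takahashi_fun U L)"
  unfolding branch_interval_def using takahashi_fun_DERIV_on_Ioo
  by (rule DERIV_pos_imp_strict_mono_on_Ioo)

lemma takahashi_fun_image_branch_interval:
  "takahashi_fun U L ` branch_interval L l = UNIV"
proof -
  have "continuous_on (branch_interval L l) (takahashi_fun U L)"
    using takahashi_fun_DERIV_on_branch_interval(1)[THEN DERIV_isCont]
    by (intro continuous_at_imp_continuous_on) blast
  then show ?thesis
    using takahashi_fun_unbounded_below[OF L_pos U_pos] takahashi_fun_unbounded_above[OF L_pos U_pos]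
    unfolding branch_interval_def by (rule continuous_on_Ioo_unbounded_surj)
qed

definition branch :: "nat \<Rightarrow> real \<Rightarrow> real" where
  "branch l = inv_into (branch_interval L l) (takahashi_fun U L)"

lemma branch_mem: "branch l \<Lambda> \<in> branch_interval L l"
  unfolding branch_def using takahashi_fun_image_branch_interval by (auto intro: inv_into_into)

lemma takahashi_fun_branch: "takahashi_fun U L (branch l \<Lambda>) = \<Lambda>"
  unfolding branch_def using takahashi_fun_image_branch_interval by (auto intro: f_inv_into_f)

lemmas strict_mono_on_Ioo = strict_mono_on_branch_interval[unfolded branch_interval_def]
lemmas branch_mem_Ioo = branch_mem[unfolded branch_interval_def]

lemma branch_has_positive_derivative:
  "\<exists>D. (branch l has_real_derivative D) (at \<Lambda>) \<and> 0 < D"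
proof -
  have pos: "0 < takahashi_deriv U L (branch l \<Lambda>)"
    using takahashi_fun_DERIV_on_branch_interval(2)[OF branch_mem] .
  have "(branch l has_real_derivative inverse (takahashi_deriv U L (branch l \<Lambda>))) (at \<Lambda>)"
    using strict_mono_on_inverse_has_real_derivative[where g = "branch l",
        OF takahashi_fun_DERIV_on_Ioo(1) _ strict_mono_on_Ioo branch_mem_Ioo takahashi_fun_branch] pos
    by (simp add: dual_order.strict_implies_not_eq)
  with pos show ?thesis
    by (intro exI[of _ "inverse (takahashi_deriv U L (branch l \<Lambda>))"]) simp
qed

lemma branch_tendsto_at_bot: "(branch l \<longlongrightarrow> (real l - 1) * (2*pi / real L)) at_bot"
  using strict_mono_on_inverse_tendsto_at_bot[where g = "branch l",
      OF strict_mono_on_Ioo branch_mem_Ioo takahashi_fun_branch] .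

lemma branch_tendsto_at_top: "(branch l \<longlongrightarrow> real l * (2*pi / real L)) at_top"
  using strict_mono_on_inverse_tendsto_at_top[where g = "branch l",
      OF strict_mono_on_Ioo branch_mem_Ioo takahashi_fun_branch] .

lemma solutions_eq_branches:
  "{x \<in> {0..<2*pi}. takahashi_eq U L \<Lambda> x} = (\<lambda>l. branch l \<Lambda>) ` {1..L}"
proof -
  have "{x \<in> {0..<2*pi}. takahashi_eq U L \<Lambda> x} =
        {x \<in> (\<Union>l\<in>{1..L}. branch_interval L l). takahashi_fun U L x = \<Lambda>}"
    unfolding takahashi_eq_iff nonzero_sin_half_eq_Union_branch_interval[OF L_pos, symmetric]
    by blast
  also have "\<dots> = (\<lambda>l. branch l \<Lambda>) ` {1..L}"
    using branch_mem takahashi_fun_branch strict_mono_on_eqD[OF strict_mono_on_branch_interval]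
    by fastforce
  finally show ?thesis .
qed

lemma inj_on_branches: "inj_on (\<lambda>l. branch l \<Lambda>) {1..L}"
proof (rule inj_onI)
  fix l l' assume "branch l \<Lambda> = branch l' \<Lambda>"
  then show "l = l'"
    using branch_interval_unique[OF L_pos branch_mem[of l \<Lambda>]] branch_mem[of l' \<Lambda>] by simp
qed

end

theorem mainTheorem1:
  fixes L :: nat and U :: real
  assumes "L > 0" and "U > 0" and "real L > 8 / U"
  shows "\<exists>q :: nat \<Rightarrow> real \<Rightarrow> real.
     (\<forall>\<Lambda>. {x \<in> {0..<2*pi}. takahashi_eq U L \<Lambda> x} = (\<lambda>l. q l \<Lambda>) ` {1..L}
           \<and> inj_on (\<lambda>l. q l \<Lambda>) {1..L}) \<and>
     (\<forall>l\<in>{1..L}.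
        (\<forall>\<Lambda>. (real l - 1) * (2*pi / real L) \<le> q l \<Lambda> \<and> q l \<Lambda> \<le> real l * (2*pi / real L)) \<and>
        (\<forall>\<Lambda>. \<exists>D. (q l has_real_derivative D) (at \<Lambda>) \<and> D > 0) \<and>
        (q l \<longlongrightarrow> (real l - 1) * (2*pi / real L)) at_bot \<and>
        (q l \<longlongrightarrow> real l * (2*pi / real L)) at_top)"
proof -
  interpret takahashi_condition U L
    using assms by unfold_locales (simp_all add: field_simps)
  have "(real l - 1) * (2*pi / real L) \<le> branch l \<Lambda> \<and> branch l \<Lambda> \<le> real l * (2*pi / real L)"
    for l \<Lambda>
    using branch_mem[of l \<Lambda>] by (simp add: branch_interval_def)
  then show ?thesis
    using solutions_eq_branches inj_on_branches branch_has_positive_derivative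
      branch_tendsto_at_bot branch_tendsto_at_top
    by (intro exI[of _ branch]) blast
qed

end
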